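(* Let $G$ be a gradual mechanism implementing an SCF $f$. Then $G$ is incentive compatible if and only if for every agent $i\in N$ and all type profiles $\theta^1,\theta^2\in\Theta$ that are both consistent with a common strategy profile $s_{-i}\in S_{-i}$, we have $f(\theta^1)\,R(\theta^1_i)\,f(\theta^2)$.
   Context: Setting. $N$ is a finite set of agents and $X$ a finite set of outcomes. Each agent $i\in N$ has a finite type space $\Theta_i$; each type $\theta_i$ determines a complete and transitive preference $R(\theta_i)$ on $X$. $\Theta=\prod_{i\in N}\Theta_i$. An SCF is a map $f:\Theta\to X$. Dynamic game forms. A dynamic game form with perfect recall consists of a finite tree $\bar H$ of histories (finite sequences of action profiles) containing the empty initial history $\varnothing$, closed under prefixes ($\preceq$ prefix order); terminal histories $Z$, non-terminal $H$; at each $h\in H$ a nonempty set $\mathbb P(h)$ of agents move simultaneously with available actions $A_i(h)$, all action profiles leading to successors; $\mathbb P(\varnothing)=N$; each agent's set $H_i$ of decision nodes is partitioned into information sets $\boldsymbol H_i$, with available actions constant on information sets and perfect recall; $\mathcal X:Z\to X$ the outcome function. A strategy $s_i$ chooses an available action at each information set of $i$; $S_i$ is the set of strategies and for $M\subseteq N$, $s_M$ is a profile of strategies of the agents in $M$ ($s_{-i}$ for $M=N\setminus\{i\}$). A complete profile $s$ determines a terminal history $z(s)$ and $\mathcal X(s)=\mathcal X(z(s))$. Gradual mechanisms. A GM implementing $f$ is such a game form in which (1) actions of $i$ are nonempty subsets of $\Theta_i$; (2) at every $h\in H_i$ the available actions of $i$ are pairwise disjoint with union $\Theta_i(h)$,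 where for any history $h$, $\Theta_i(h)$ is the last action of $i$ in $h$ ($\Theta_i$ if $i$ has not acted); (3) $\mathcal X(z)=f(\theta)$ for all $z\in Z$, $\theta\in\Theta(z)=\prod_i\Theta_i(z)$. The sets $\Theta(z)$, $z\in Z$, partition $\Theta$. Consistency. For $M\subsetneq N$ and $s_M$, a history $h$ is consistent with $s_M$ if $h\preceq z(s_M,s_{N\setminus M})$ for some $s_{N\setminus M}$; a type profile $\theta$ is consistent with $s_M$ if the unique $z\in Z$ with $\theta\in\Theta(z)$ is consistent with $s_M$. Incentive compatibility. A strategy $s_i$ is unconditional for type $\theta_i$ if $\theta_i\in s_i(h)$ for every $h\in H_i$ with $\theta_i\in\Theta_i(h)$; denote such a strategy $s_{\theta_i}$. The GM is incentive compatible if $\mathcal X(s_{\theta_i},s_{-i})\,R(\theta_i)\,\mathcal X(s_i,s_{-i})$ for all $i$, $\theta_i$, unconditional $s_{\theta_i}$ for $\theta_i$, $s_i\in S_i$, $s_{-i}\in S_{-i}$. *)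

theory Defs
  imports Main "HOL-Library.Sublist"
begin

text \<open>Agents: type 'i (finite; N = UNIV).  An action of agent i is a set of types ('t set), as in a gradual
 mechanism.  An action profile at a history records Some action for each mover and None for
 every non-mover; a history is a finite list of action profiles.\<close>

type_synonym ('i,'t) aprof = "'i \<Rightarrow> 't set option"
type_synonym ('i,'t) hist = "('i,'t) aprof list"

record ('i,'t,'x) gform =
  tree   :: "('i,'t) hist set"
  movers :: "('i,'t) hist \<Rightarrow> 'i set"
  acts   :: "'i \<Rightarrow> ('i,'t) hist \<Rightarrow> 't set set"
  info   :: "'i \<Rightarrow> ('i,'t) hist set set"
  outc   :: "('i,'t) hist \<Rightarrow> 'x"

definition nonterminals :: "('i,'t,'x) gform \<Rightarrow> ('i,'t) hist set" where
  "nonterminals G = {h \<in> tree G. \<exists>a. h @ [a] \<in> tree G}"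

definition terminals :: "('i,'t,'x) gform \<Rightarrow> ('i,'t) hist set" where
  "terminals G = tree G - nonterminals G"

definition dec_nodes :: "('i,'t,'x) gform \<Rightarrow> 'i \<Rightarrow> ('i,'t) hist set" where
  "dec_nodes G i = {h \<in> nonterminals G. i \<in> movers G h}"

definition infoset :: "('i,'t,'x) gform \<Rightarrow> 'i \<Rightarrow> ('i,'t) hist \<Rightarrow> ('i,'t) hist set" where
  "infoset G i h = (THE I. I \<in> info G i \<and> h \<in> I)"

definition experience :: "('i,'t,'x) gform \<Rightarrow> 'i \<Rightarrow> ('i,'t) hist \<Rightarrow> (('i,'t) hist set \<times> 't set) list" where
  "experience G i h =
     map (\<lambda>k. (infoset G i (take k h), the ((h ! k) i)))
         (filter (\<lambda>k. (h ! k) i \<noteq> None) [0..<length h])"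

definition game_form :: "('i,'t,'x) gform \<Rightarrow> bool" where
  "game_form G \<longleftrightarrow>
     finite (tree G) \<and> [] \<in> tree G \<and>
     (\<forall>h \<in> tree G. \<forall>h'. prefix h' h \<longrightarrow> h' \<in> tree G) \<and>
     (\<forall>h \<in> nonterminals G.
        movers G h \<noteq> {} \<and> (\<forall>i \<in> movers G h. acts G i h \<noteq> {}) \<and>
        {a. h @ [a] \<in> tree G} =
        {a. \<forall>i. (i \<in> movers G h \<longrightarrow> (\<exists>b \<in> acts G i h. a i = Some b)) \<and>
                 (i \<notin> movers G h \<longrightarrow> a i = None)}) \<and>
     [] \<in> nonterminals G \<and> movers G [] = UNIV \<and>
     (\<forall>i. (\<forall>I \<in> info G i. I \<noteq> {}) \<and> \<Union>(info G i) = dec_nodes G i \<and>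
          (\<forall>I \<in> info G i. \<forall>J \<in> info G i. I \<noteq> J \<longrightarrow> I \<inter> J = {})) \<and>
     (\<forall>i. \<forall>I \<in> info G i. \<forall>h \<in> I. \<forall>h' \<in> I. acts G i h = acts G i h') \<and>
     (\<forall>i. \<forall>I \<in> info G i. \<forall>h \<in> I. \<forall>h' \<in> I. experience G i h = experience G i h')"

definition type_set :: "('i \<Rightarrow> 't set) \<Rightarrow> 'i \<Rightarrow> ('i,'t) hist \<Rightarrow> 't set" where
  "type_set Theta i h =
     (case filter (\<lambda>a. a i \<noteq> None) h of [] \<Rightarrow> Theta i | as \<Rightarrow> the (last as i))"

definition gradual_mechanism ::
  "('i,'t,'x) gform \<Rightarrow> ('i \<Rightarrow> 't set) \<Rightarrow> (('i \<Rightarrow> 't) \<Rightarrow> 'x) \<Rightarrow> bool" where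
  "gradual_mechanism G Theta f \<longleftrightarrow>
     game_form G \<and>
     (\<forall>i. \<forall>h \<in> dec_nodes G i.
        (\<forall>a \<in> acts G i h. a \<noteq> {} \<and> a \<subseteq> Theta i) \<and>
        (\<forall>a \<in> acts G i h. \<forall>b \<in> acts G i h. a \<noteq> b \<longrightarrow> a \<inter> b = {}) \<and>
        \<Union>(acts G i h) = type_set Theta i h) \<and>
     (\<forall>z \<in> terminals G. \<forall>\<theta>. (\<forall>i. \<theta> i \<in> type_set Theta i z) \<longrightarrow> outc G z = f \<theta>)"

text \<open>A strategy of i: an available action at each decision node of i, constant on
  information sets (normalised to {} off the decision nodes of i).\<close>
definition is_strategy :: "('i,'t,'x) gform \<Rightarrow> 'i \<Rightarrow> (('i,'t) hist \<Rightarrow> 't set) \<Rightarrow> bool" where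
  "is_strategy G i s \<longleftrightarrow>
     (\<forall>h \<in> dec_nodes G i. s h \<in> acts G i h) \<and>
     (\<forall>I \<in> info G i. \<forall>h \<in> I. \<forall>h' \<in> I. s h = s h') \<and>
     (\<forall>h. h \<notin> dec_nodes G i \<longrightarrow> s h = {})"

definition prof_act :: "('i,'t,'x) gform \<Rightarrow> ('i \<Rightarrow> ('i,'t) hist \<Rightarrow> 't set) \<Rightarrow> ('i,'t) hist \<Rightarrow> ('i,'t) aprof" where
  "prof_act G s h = (\<lambda>j. if j \<in> movers G h then Some (s j h) else None)"

definition follows :: "('i,'t,'x) gform \<Rightarrow> ('i \<Rightarrow> ('i,'t) hist \<Rightarrow> 't set) \<Rightarrow> ('i,'t) hist \<Rightarrow> bool" where
  "follows G s z \<longleftrightarrow> (\<forall>k < length z. z ! k = prof_act G s (take k z))"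

definition play :: "('i,'t,'x) gform \<Rightarrow> ('i \<Rightarrow> ('i,'t) hist \<Rightarrow> 't set) \<Rightarrow> ('i,'t) hist" where
  "play G s = (THE z. z \<in> terminals G \<and> follows G s z)"

definition outcome :: "('i,'t,'x) gform \<Rightarrow> ('i \<Rightarrow> ('i,'t) hist \<Rightarrow> 't set) \<Rightarrow> 'x" where
  "outcome G s = outc G (play G s)"

definition hist_consistent ::
  "('i,'t,'x) gform \<Rightarrow> 'i set \<Rightarrow> ('i \<Rightarrow> ('i,'t) hist \<Rightarrow> 't set) \<Rightarrow> ('i,'t) hist \<Rightarrow> bool" where
  "hist_consistent G M sM h \<longleftrightarrow>
     (\<exists>s'. (\<forall>j. j \<notin> M \<longrightarrow> is_strategy G j (s' j)) \<and>
           prefix h (play G (\<lambda>j. if j \<in> M then sM j else s' j)))"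

definition type_consistent ::
  "('i,'t,'x) gform \<Rightarrow> ('i \<Rightarrow> 't set) \<Rightarrow> 'i set \<Rightarrow> ('i \<Rightarrow> ('i,'t) hist \<Rightarrow> 't set) \<Rightarrow> ('i \<Rightarrow> 't) \<Rightarrow> bool" where
  "type_consistent G Theta M sM \<theta> \<longleftrightarrow>
     (\<exists>z \<in> terminals G. (\<forall>j. \<theta> j \<in> type_set Theta j z) \<and> hist_consistent G M sM z)"

definition unconditional ::
  "('i,'t,'x) gform \<Rightarrow> ('i \<Rightarrow> 't set) \<Rightarrow> 'i \<Rightarrow> 't \<Rightarrow> (('i,'t) hist \<Rightarrow> 't set) \<Rightarrow> bool" where
  "unconditional G Theta i t s \<longleftrightarrow>
     is_strategy G i s \<and> (\<forall>h \<in> dec_nodes G i. t \<in> type_set Theta i h \<longrightarrow> t \<in> s h)"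

text \<open>R i t x y: x R(t) y, the (weak) preference of type t of agent i.\<close>
definition incentive_compatible ::
  "('i,'t,'x) gform \<Rightarrow> ('i \<Rightarrow> 't set) \<Rightarrow> ('i \<Rightarrow> 't \<Rightarrow> 'x \<Rightarrow> 'x \<Rightarrow> bool) \<Rightarrow> bool" where
  "incentive_compatible G Theta R \<longleftrightarrow>
     (\<forall>i. \<forall>t \<in> Theta i. \<forall>st si s.
        unconditional G Theta i t st \<longrightarrow> is_strategy G i si \<longrightarrow>
        (\<forall>j. j \<noteq> i \<longrightarrow> is_strategy G j (s j)) \<longrightarrow>
        R i t (outcome G (s(i := st))) (outcome G (s(i := si))))"

end

theory Submission
  imports Defs
begin

text \<open>A type profile is consistent with \<open>s\<^sub>-\<^sub>i\<close> exactly when it lies in \<open>\<Theta>(z)\<close> for the play \<open>z\<close>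
  of \<open>s\<^sub>-\<^sub>i\<close> against some strategy of \<open>i\<close>, and then its value under \<open>f\<close> is the outcome of
  that play. Along a play the actions of \<open>i\<close> shrink \<open>\<Theta>\<^sub>i\<close>, and at each decision node they
  partition the current \<open>\<Theta>\<^sub>i\<close>; so a strategy of \<open>i\<close> whose play keeps \<open>\<theta>\<^sub>i\<close> can be made
  unconditional for \<open>\<theta>\<^sub>i\<close> by changing it only at nodes where it discards \<open>\<theta>\<^sub>i\<close>, none of
  which the play visits. Hence \<open>f(\<theta>\<^sup>1)\<close> and \<open>f(\<theta>\<^sup>2)\<close> for consistent profiles are the outcomes
  of an unconditional strategy of type \<open>\<theta>\<^sup>1\<^sub>i\<close> and of a deviation against the same \<open>s\<^sub>-\<^sub>i\<close>,
  and every such pair of outcomes arises in this way.\<close>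

lemma game_form_prefix_closed:
  assumes "game_form G" "h \<in> tree G" "prefix h' h"
  shows "h' \<in> tree G"
  using assms(1) unfolding game_form_def using assms(2,3) by (elim conjE) blast

lemma game_form_finite_tree:
  assumes "game_form G"
  shows "finite (tree G)"
  using assms unfolding game_form_def by (elim conjE)

lemma game_form_root:
  assumes "game_form G"
  shows "[] \<in> nonterminals G" "movers G [] = UNIV"
  using assms unfolding game_form_def by simp_all

lemma game_form_acts_nonempty:
  assumes "game_form G" "h \<in> nonterminals G" "i \<in> movers G h"
  shows "acts G i h \<noteq> {}"
  using assms(1) unfolding game_form_def using assms(2,3) by (elim conjE) blast

lemma game_form_snoc_in_tree_iff:
  assumes "game_form G" "h \<in> nonterminals G"
  shows "h @ [a] \<in> tree G \<longleftrightarrow>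
    (\<forall>i. (i \<in> movers G h \<longrightarrow> (\<exists>b \<in> acts G i h. a i = Some b)) \<and> (i \<notin> movers G h \<longrightarrow> a i = None))"
proof -
  have "{a. h @ [a] \<in> tree G} =
        {a. \<forall>i. (i \<in> movers G h \<longrightarrow> (\<exists>b \<in> acts G i h. a i = Some b)) \<and>
                 (i \<notin> movers G h \<longrightarrow> a i = None)}"
    using assms(1) unfolding game_form_def using assms(2) by (elim conjE) blast
  then show ?thesis by (simp add: set_eq_iff)
qed

lemma snoc_in_tree_nonterminal:
  "game_form G \<Longrightarrow> h @ [a] \<in> tree G \<Longrightarrow> h \<in> nonterminals G"
  unfolding nonterminals_def using game_form_prefix_closed[of G "h @ [a]" h] by auto

lemma game_form_snoc_action:
  assumes "game_form G" "h @ [a] \<in> tree G"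
  shows "i \<in> movers G h \<Longrightarrow> \<exists>b \<in> acts G i h. a i = Some b"
    and "i \<notin> movers G h \<Longrightarrow> a i = None"
  using game_form_snoc_in_tree_iff[OF assms(1) snoc_in_tree_nonterminal[OF assms]] assms(2)
  by blast+

lemma game_form_Union_info:
  assumes "game_form G"
  shows "\<Union>(info G i) = dec_nodes G i"
  using assms unfolding game_form_def by (elim conjE) meson

lemma game_form_acts_infoset:
  assumes "game_form G" "I \<in> info G i" "h \<in> I" "h' \<in> I"
  shows "acts G i h = acts G i h'"
  using assms(1) unfolding game_form_def using assms(2-4) by (elim conjE) meson

lemma take_in_nonterminals:
  assumes "game_form G" "z \<in> tree G" "k < length z"
  shows "take k z \<in> nonterminals G"
proof -
  have "take (Suc k) z \<in> tree G"
    using game_form_prefix_closed[OF assms(1,2)] by (simp add: take_is_prefix)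
  then have "take k z @ [z ! k] \<in> tree G" by (simp add: take_Suc_conv_app_nth[OF assms(3)])
  then show ?thesis using snoc_in_tree_nonterminal[OF assms(1)] by blast
qed

lemma terminal_prefix_eq:
  assumes "game_form G" "z \<in> terminals G" "z' \<in> tree G" "prefix z z'"
  shows "z = z'"
proof (rule ccontr)
  assume "z \<noteq> z'"
  with assms(4) have "length z < length z'"
    by (simp add: prefix_length_less)
  moreover have "take (length z) z' = z"
    using assms(4) by (auto simp: prefix_def)
  ultimately have "take (length z) z' \<in> nonterminals G"
    using take_in_nonterminals[OF assms(1,3)] by blast
  with \<open>take (length z) z' = z\<close> assms(2) show False by (simp add: terminals_def)
qed

lemma gradual_mechanism_game_form:
  "gradual_mechanism G Theta f \<Longrightarrow> game_form G"
  unfolding gradual_mechanism_def by (elim conjE) meson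

lemma gradual_mechanism_acts_nonempty:
  "gradual_mechanism G Theta f \<Longrightarrow> h \<in> dec_nodes G i \<Longrightarrow> a \<in> acts G i h \<Longrightarrow> a \<noteq> {}"
  unfolding gradual_mechanism_def by (elim conjE) blast

lemma gradual_mechanism_Union_acts:
  "gradual_mechanism G Theta f \<Longrightarrow> h \<in> dec_nodes G i \<Longrightarrow> \<Union>(acts G i h) = type_set Theta i h"
  unfolding gradual_mechanism_def by (elim conjE) meson

lemma gradual_mechanism_outc:
  "gradual_mechanism G Theta f \<Longrightarrow> z \<in> terminals G \<Longrightarrow> \<forall>j. \<theta> j \<in> type_set Theta j z \<Longrightarrow>
   outc G z = f \<theta>"
  unfolding gradual_mechanism_def by (elim conjE) meson

lemma type_set_Nil [simp]: "type_set Theta i [] = Theta i"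
  unfolding type_set_def by simp

lemma type_set_snoc:
  "type_set Theta i (h @ [a]) = (case a i of None \<Rightarrow> type_set Theta i h | Some b \<Rightarrow> b)"
  unfolding type_set_def by (cases "a i"; cases "filter (\<lambda>a. a i \<noteq> None) h") simp_all

lemma type_set_snoc_in_tree:
  assumes gf: "game_form G" and step: "h @ [a] \<in> tree G"
  shows "i \<in> movers G h \<Longrightarrow> type_set Theta i (h @ [a]) \<in> acts G i h \<and> h \<in> dec_nodes G i"
    and "i \<notin> movers G h \<Longrightarrow> type_set Theta i (h @ [a]) = type_set Theta i h"
  using game_form_snoc_action[OF gf step, of i] snoc_in_tree_nonterminal[OF gf step]
  by (auto simp: type_set_snoc dec_nodes_def)

lemma type_set_snoc_subset:
  assumes GM: "gradual_mechanism G Theta f" and step: "h @ [a] \<in> tree G"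
  shows "type_set Theta i (h @ [a]) \<subseteq> type_set Theta i h"
  using type_set_snoc_in_tree[OF gradual_mechanism_game_form[OF GM] step, of i Theta]
    gradual_mechanism_Union_acts[OF GM, of h i]
  by (cases "i \<in> movers G h") auto

lemma type_set_antimono:
  assumes GM: "gradual_mechanism G Theta f"
  shows "z \<in> tree G \<Longrightarrow> prefix h z \<Longrightarrow> type_set Theta i z \<subseteq> type_set Theta i h"
proof (induction z rule: rev_induct)
  case (snoc a z)
  have "z \<in> tree G"
    using game_form_prefix_closed[OF gradual_mechanism_game_form[OF GM] snoc.prems(1)] by simp
  with snoc type_set_snoc_subset[OF GM snoc.prems(1), of i] show ?case by auto
qed simp

lemma type_set_subset_Theta:
  "gradual_mechanism G Theta f \<Longrightarrow> z \<in> tree G \<Longrightarrow> type_set Theta i z \<subseteq> Theta i"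
  using type_set_antimono[of G Theta f z "[]" i] by simp

lemma type_set_nonempty:
  assumes GM: "gradual_mechanism G Theta f"
  shows "z \<in> tree G \<Longrightarrow> type_set Theta i z \<noteq> {}"
proof (induction z rule: rev_induct)
  case Nil
  have gf: "game_form G" using GM by (rule gradual_mechanism_game_form)
  then have root: "[] \<in> dec_nodes G i"
    using game_form_root unfolding dec_nodes_def by blast
  then obtain a where "a \<in> acts G i []"
    using game_form_acts_nonempty[OF gf] by (auto simp: dec_nodes_def)
  then show ?case
    using gradual_mechanism_acts_nonempty[OF GM root] gradual_mechanism_Union_acts[OF GM root]
    by fastforce
next
  case (snoc a z)
  have gf: "game_form G" using GM by (rule gradual_mechanism_game_form)
  have "z \<in> tree G" using game_form_prefix_closed[OF gf snoc.prems] by simp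
  then show ?case
    using snoc.IH type_set_snoc_in_tree[OF gf snoc.prems, of i Theta]
      gradual_mechanism_acts_nonempty[OF GM]
    by (cases "i \<in> movers G z") auto
qed

lemma type_set_infoset_eq:
  assumes GM: "gradual_mechanism G Theta f" and I: "I \<in> info G i" "h \<in> I" "h' \<in> I"
  shows "type_set Theta i h = type_set Theta i h'"
proof -
  have gf: "game_form G" using GM by (rule gradual_mechanism_game_form)
  have "h \<in> dec_nodes G i" "h' \<in> dec_nodes G i"
    using game_form_Union_info[OF gf, of i] I by blast+
  then show ?thesis
    using gradual_mechanism_Union_acts[OF GM] game_form_acts_infoset[OF gf I] by metis
qed

lemma type_profile_exists:
  assumes "gradual_mechanism G Theta f" "z \<in> tree G" "t \<in> type_set Theta i z"
  shows "\<exists>\<theta>. \<theta> i = t \<and> (\<forall>j. \<theta> j \<in> type_set Theta j z)"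
proof -
  have "\<forall>j. \<exists>x. x \<in> type_set Theta j z"
    using type_set_nonempty[OF assms(1,2)] by blast
  then obtain \<theta> where "\<forall>j. \<theta> j \<in> type_set Theta j z" by metis
  with assms(3) show ?thesis by (intro exI[of _ "\<theta>(i := t)"]) auto
qed

lemma follows_snoc:
  "follows G s (h @ [a]) \<longleftrightarrow> follows G s h \<and> a = prof_act G s h"
  unfolding follows_def by (auto simp: nth_append less_Suc_eq)

lemma follows_take_eq:
  "follows G s z \<Longrightarrow> follows G s z' \<Longrightarrow> n \<le> length z \<Longrightarrow> n \<le> length z' \<Longrightarrow> take n z = take n z'"
proof (induction n)
  case (Suc n)
  then have "n < length z" "n < length z'" by auto
  with Suc show ?case
    unfolding follows_def by (simp add: take_Suc_conv_app_nth)
qed simp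

lemma follows_terminal_unique:
  assumes gf: "game_form G"
    and "z \<in> terminals G" "follows G s z" "z' \<in> terminals G" "follows G s z'"
  shows "z = z'"
proof -
  have "prefix z z' \<or> prefix z' z"
    using follows_take_eq[OF assms(3,5), of "min (length z) (length z')"]
    by (metis min.absorb1 min.absorb2 nle_le take_all take_is_prefix)
  moreover have "z \<in> tree G" "z' \<in> tree G"
    using assms(2,4) by (auto simp: terminals_def)
  ultimately show ?thesis
    using terminal_prefix_eq[OF gf] assms(2,4) by metis
qed

lemma follows_terminal_exists:
  assumes gf: "game_form G" and strat: "\<And>j. is_strategy G j (s j)"
  shows "\<exists>z \<in> terminals G. follows G s z"
proof -
  define F where "F = {h \<in> tree G. follows G s h}"
  have "finite F" "[] \<in> F"
    using game_form_finite_tree[OF gf] game_form_root(1)[OF gf]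
    unfolding F_def nonterminals_def follows_def by auto
  then obtain h where h: "h \<in> F" and longest: "\<And>h'. h' \<in> F \<Longrightarrow> length h' \<le> length h"
    using ex_has_greatest_nat[of "\<lambda>h. h \<in> F" "[]" length "Suc (Max (length ` F))"]
    by (metis Max_ge finite_imageI image_eqI le_imp_less_Suc)
  have "h \<in> terminals G"
  proof (rule ccontr)
    assume "h \<notin> terminals G"
    with h have nt: "h \<in> nonterminals G" by (simp add: F_def terminals_def)
    have "\<And>j. j \<in> movers G h \<Longrightarrow> s j h \<in> acts G j h"
      using strat nt unfolding is_strategy_def dec_nodes_def by blast
    then have "h @ [prof_act G s h] \<in> tree G"
      by (simp add: game_form_snoc_in_tree_iff[OF gf nt] prof_act_def)
    with h have "h @ [prof_act G s h] \<in> F" by (simp add: F_def follows_snoc)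
    from longest[OF this] show False by simp
  qed
  with h show ?thesis by (auto simp: F_def)
qed

lemma play_eqI:
  "game_form G \<Longrightarrow> z \<in> terminals G \<Longrightarrow> follows G s z \<Longrightarrow> play G s = z"
  unfolding play_def by (rule the_equality) (use follows_terminal_unique in blast)+

lemma play_terminal_follows:
  assumes "game_form G" "\<And>j. is_strategy G j (s j)"
  shows "play G s \<in> terminals G" "follows G s (play G s)"
  using follows_terminal_exists[OF assms] play_eqI[OF assms(1)] by auto

lemma play_fun_upd_terminal_follows:
  assumes "game_form G" "\<forall>j. j \<noteq> i \<longrightarrow> is_strategy G j (s j)" "is_strategy G i si"
  shows "play G (s(i := si)) \<in> terminals G" "follows G (s(i := si)) (play G (s(i := si)))"
  using play_terminal_follows[of G "s(i := si)"] assms by auto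

lemma unconditional_type_set_play:
  assumes GM: "gradual_mechanism G Theta f" and zt: "z \<in> tree G" and z: "follows G s z"
    and uncond: "unconditional G Theta i t (s i)" and t: "t \<in> Theta i"
  shows "t \<in> type_set Theta i z"
proof -
  have gf: "game_form G" using GM by (rule gradual_mechanism_game_form)
  have "k \<le> length z \<Longrightarrow> t \<in> type_set Theta i (take k z)" for k
  proof (induction k)
    case (Suc k)
    then have k: "k < length z" by simp
    have step: "take (Suc k) z = take k z @ [prof_act G s (take k z)]"
      using z k by (simp add: take_Suc_conv_app_nth follows_def)
    have "take k z \<in> nonterminals G" using take_in_nonterminals[OF gf zt k] .
    with Suc.IH k uncond have "i \<in> movers G (take k z) \<Longrightarrow> t \<in> s i (take k z)"
      unfolding unconditional_def dec_nodes_def by simp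
    with Suc.IH k show ?case
      by (simp add: step type_set_snoc prof_act_def)
  qed (simp add: t)
  from this[of "length z"] show ?thesis by simp
qed

lemma follows_strategy_change:
  assumes GM: "gradual_mechanism G Theta f"
    and zt: "z \<in> tree G" and z: "follows G (s(i := s0)) z" and t: "t \<in> type_set Theta i z"
    and agree: "\<And>h. h \<in> dec_nodes G i \<Longrightarrow> t \<in> s0 h \<Longrightarrow> s1 h = s0 h"
  shows "follows G (s(i := s1)) z"
  unfolding follows_def
proof (intro allI impI)
  fix k assume k: "k < length z"
  have gf: "game_form G" using GM by (rule gradual_mechanism_game_form)
  have zk: "z ! k = prof_act G (s(i := s0)) (take k z)" using z k by (simp add: follows_def)
  have "s1 (take k z) = s0 (take k z)" if mover: "i \<in> movers G (take k z)"
  proof -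
    have "type_set Theta i z \<subseteq> type_set Theta i (take (Suc k) z)"
      using type_set_antimono[OF GM zt] by (simp add: take_is_prefix)
    also have "\<dots> = s0 (take k z)"
      using mover k by (simp add: take_Suc_conv_app_nth zk type_set_snoc prof_act_def)
    finally show ?thesis
      using agree t mover take_in_nonterminals[OF gf zt k] by (simp add: dec_nodes_def subset_eq)
  qed
  then show "z ! k = prof_act G (s(i := s1)) (take k z)"
    using zk by (auto simp: prof_act_def)
qed

text \<open>Replace \<open>s0\<close> by an action containing \<open>t\<close> wherever \<open>t\<close> is still possible but \<open>s0\<close> discards
  it; this respects information sets because both \<open>acts\<close> and \<open>type_set\<close> are constant on them.\<close>

lemma unconditional_strategy_exists:
  assumes GM: "gradual_mechanism G Theta f" and s0: "is_strategy G i s0"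
  shows "\<exists>s1. unconditional G Theta i t s1 \<and> (\<forall>h \<in> dec_nodes G i. t \<in> s0 h \<longrightarrow> s1 h = s0 h)"
proof -
  have gf: "game_form G" using GM by (rule gradual_mechanism_game_form)
  define pick where "pick h = (SOME a. a \<in> acts G i h \<and> t \<in> a)" for h
  define s1 where "s1 h = (if h \<in> dec_nodes G i \<and> t \<in> type_set Theta i h \<and> t \<notin> s0 h
      then pick h else s0 h)" for h
  have pick: "pick h \<in> acts G i h \<and> t \<in> pick h"
    if "h \<in> dec_nodes G i" "t \<in> type_set Theta i h" for h
    unfolding pick_def
    by (rule someI_ex) (use gradual_mechanism_Union_acts[OF GM that(1)] that(2) in blast)
  have "is_strategy G i s1"
    unfolding is_strategy_def
  proof (intro conjI ballI allI impI)
    fix h assume "h \<in> dec_nodes G i"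
    then show "s1 h \<in> acts G i h" using pick s0 unfolding s1_def is_strategy_def by auto
  next
    fix I h h' assume I: "I \<in> info G i" "h \<in> I" "h' \<in> I"
    have "h \<in> dec_nodes G i" "h' \<in> dec_nodes G i"
      using game_form_Union_info[OF gf, of i] I by blast+
    moreover have "s0 h = s0 h'" using s0 I unfolding is_strategy_def by blast
    ultimately show "s1 h = s1 h'"
      unfolding s1_def pick_def
      using game_form_acts_infoset[OF gf I] type_set_infoset_eq[OF GM I] by simp
  next
    fix h assume "h \<notin> dec_nodes G i"
    then show "s1 h = {}" using s0 unfolding s1_def is_strategy_def by auto
  qed
  moreover have "\<forall>h \<in> dec_nodes G i. t \<in> type_set Theta i h \<longrightarrow> t \<in> s1 h"
    using pick unfolding s1_def by auto
  ultimately show ?thesis unfolding unconditional_def s1_def by auto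
qed

lemma outcome_fun_upd_eq:
  assumes GM: "gradual_mechanism G Theta f"
    and "\<forall>j. j \<noteq> i \<longrightarrow> is_strategy G j (s j)" "is_strategy G i si"
    and "\<forall>j. \<theta> j \<in> type_set Theta j (play G (s(i := si)))"
  shows "outcome G (s(i := si)) = f \<theta>"
  using gradual_mechanism_outc[OF GM] play_fun_upd_terminal_follows(1)[OF _ assms(2,3)] assms(4)
    gradual_mechanism_game_form[OF GM]
  unfolding outcome_def by blast

lemma type_consistent_iff_play:
  assumes GM: "gradual_mechanism G Theta f" and strat: "\<forall>j. j \<noteq> i \<longrightarrow> is_strategy G j (s j)"
  shows "type_consistent G Theta (- {i}) s \<theta> \<longleftrightarrow>
    (\<exists>si. is_strategy G i si \<and> (\<forall>j. \<theta> j \<in> type_set Theta j (play G (s(i := si)))))"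
proof -
  have gf: "game_form G" using GM by (rule gradual_mechanism_game_form)
  have profile: "(\<lambda>j. if j \<in> - {i} then s j else s' j) = s(i := s' i)" for s'
    by (auto simp: fun_eq_iff)
  have play: "play G (s(i := si)) \<in> terminals G" "play G (s(i := si)) \<in> tree G"
    if "is_strategy G i si" for si
    using play_fun_upd_terminal_follows(1)[OF gf strat that] by (auto simp: terminals_def)
  show ?thesis
  proof
    assume "type_consistent G Theta (- {i}) s \<theta>"
    then obtain z s' where "z \<in> terminals G" "\<forall>j. \<theta> j \<in> type_set Theta j z"
      "is_strategy G i (s' i)" "prefix z (play G (s(i := s' i)))"
      unfolding type_consistent_def hist_consistent_def profile by auto
    then show "\<exists>si. is_strategy G i si \<and> (\<forall>j. \<theta> j \<in> type_set Theta j (play G (s(i := si))))"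
      using terminal_prefix_eq[OF gf] play by metis
  next
    assume "\<exists>si. is_strategy G i si \<and> (\<forall>j. \<theta> j \<in> type_set Theta j (play G (s(i := si))))"
    then obtain si where si: "is_strategy G i si"
      and \<theta>: "\<forall>j. \<theta> j \<in> type_set Theta j (play G (s(i := si)))" by blast
    have "hist_consistent G (- {i}) s (play G (s(i := si)))"
      unfolding hist_consistent_def profile
      by (rule exI[of _ "\<lambda>_. si"]) (simp add: si)
    with play(1)[OF si] \<theta> show "type_consistent G Theta (- {i}) s \<theta>"
      unfolding type_consistent_def by blast
  qed
qed

lemma incentive_compatible_consistent_pref:
  assumes GM: "gradual_mechanism G Theta f" and IC: "incentive_compatible G Theta R"
    and \<theta>1: "\<forall>j. \<theta>1 j \<in> Theta j" and strat: "\<forall>j. j \<noteq> i \<longrightarrow> is_strategy G j (s j)"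
    and consistent: "type_consistent G Theta (- {i}) s \<theta>1" "type_consistent G Theta (- {i}) s \<theta>2"
  shows "R i (\<theta>1 i) (f \<theta>1) (f \<theta>2)"
proof -
  have gf: "game_form G" using GM by (rule gradual_mechanism_game_form)
  obtain s1 where s1: "is_strategy G i s1"
    and play1: "\<forall>j. \<theta>1 j \<in> type_set Theta j (play G (s(i := s1)))"
    using consistent(1) type_consistent_iff_play[OF GM strat] by blast
  obtain s2 where s2: "is_strategy G i s2"
    and play2: "\<forall>j. \<theta>2 j \<in> type_set Theta j (play G (s(i := s2)))"
    using consistent(2) type_consistent_iff_play[OF GM strat] by blast
  obtain su where su: "unconditional G Theta i (\<theta>1 i) su"
    and agree: "\<forall>h \<in> dec_nodes G i. \<theta>1 i \<in> s1 h \<longrightarrow> su h = s1 h"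
    using unconditional_strategy_exists[OF GM s1] by blast
  have su_strat: "is_strategy G i su" using su by (simp add: unconditional_def)
  note z1 = play_fun_upd_terminal_follows[OF gf strat s1]
  have "play G (s(i := s1)) \<in> tree G" using z1(1) by (simp add: terminals_def)
  then have "follows G (s(i := su)) (play G (s(i := s1)))"
    using follows_strategy_change[OF GM _ z1(2)] play1 agree by blast
  then have "play G (s(i := su)) = play G (s(i := s1))"
    using play_eqI[OF gf z1(1)] by blast
  then have "outcome G (s(i := su)) = f \<theta>1"
    using outcome_fun_upd_eq[OF GM strat su_strat] play1 by simp
  moreover have "outcome G (s(i := s2)) = f \<theta>2"
    using outcome_fun_upd_eq[OF GM strat s2 play2] .
  moreover have "R i (\<theta>1 i) (outcome G (s(i := su))) (outcome G (s(i := s2)))"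
    using IC \<theta>1 su s2 strat unfolding incentive_compatible_def by blast
  ultimately show ?thesis by simp
qed

lemma consistent_pref_incentive_compatible:
  assumes GM: "gradual_mechanism G Theta f"
    and pref: "\<And>i \<theta>1 \<theta>2 s. \<forall>j. \<theta>1 j \<in> Theta j \<Longrightarrow> \<forall>j. \<theta>2 j \<in> Theta j \<Longrightarrow>
      \<forall>j. j \<noteq> i \<longrightarrow> is_strategy G j (s j) \<Longrightarrow>
      type_consistent G Theta (- {i}) s \<theta>1 \<Longrightarrow> type_consistent G Theta (- {i}) s \<theta>2 \<Longrightarrow>
      R i (\<theta>1 i) (f \<theta>1) (f \<theta>2)"
  shows "incentive_compatible G Theta R"
  unfolding incentive_compatible_def
proof (intro allI ballI impI)
  fix i t st si s
  assume t: "t \<in> Theta i" and uncond: "unconditional G Theta i t st"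
    and si: "is_strategy G i si" and strat: "\<forall>j. j \<noteq> i \<longrightarrow> is_strategy G j (s j)"
  have gf: "game_form G" using GM by (rule gradual_mechanism_game_form)
  have st: "is_strategy G i st" using uncond by (simp add: unconditional_def)
  define z1 where "z1 = play G (s(i := st))"
  define z2 where "z2 = play G (s(i := si))"
  have z1: "z1 \<in> tree G" "t \<in> type_set Theta i z1"
    using play_fun_upd_terminal_follows[OF gf strat st] unconditional_type_set_play[OF GM] uncond t
    by (auto simp: z1_def terminals_def)
  then obtain \<theta>1 where "\<theta>1 i = t" and \<theta>1: "\<forall>j. \<theta>1 j \<in> type_set Theta j z1"
    using type_profile_exists[OF GM] by blast
  have z2: "z2 \<in> tree G"
    using play_fun_upd_terminal_follows(1)[OF gf strat si] by (simp add: z2_def terminals_def)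
  then obtain \<theta>2 where \<theta>2: "\<forall>j. \<theta>2 j \<in> type_set Theta j z2"
    using type_profile_exists[OF GM] type_set_nonempty[OF GM, of z2 i] by blast
  have "R i (\<theta>1 i) (f \<theta>1) (f \<theta>2)"
  proof (rule pref[OF _ _ strat])
    show "\<forall>j. \<theta>1 j \<in> Theta j" "\<forall>j. \<theta>2 j \<in> Theta j"
      using \<theta>1 \<theta>2 z1(1) z2 type_set_subset_Theta[OF GM] by blast+
    show "type_consistent G Theta (- {i}) s \<theta>1" "type_consistent G Theta (- {i}) s \<theta>2"
      using type_consistent_iff_play[OF GM strat] st si \<theta>1 \<theta>2 by (auto simp: z1_def z2_def)
  qed
  then show "R i t (outcome G (s(i := st))) (outcome G (s(i := si)))"
    using outcome_fun_upd_eq[OF GM strat] st si \<theta>1 \<theta>2 \<open>\<theta>1 i = t\<close> by (simp add: z1_def z2_def)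
qed

theorem proposition4:
  fixes Theta :: "'i::finite \<Rightarrow> 't set"
    and X :: "'x set"
    and R :: "'i \<Rightarrow> 't \<Rightarrow> 'x \<Rightarrow> 'x \<Rightarrow> bool"
    and f :: "('i \<Rightarrow> 't) \<Rightarrow> 'x"
    and G :: "('i,'t,'x) gform"
  assumes fin_types: "\<And>i. finite (Theta i)"
    and fin_X: "finite X"
    and R_complete: "\<And>i t x y. t \<in> Theta i \<Longrightarrow> x \<in> X \<Longrightarrow> y \<in> X \<Longrightarrow> R i t x y \<or> R i t y x"
    and R_trans: "\<And>i t x y z. t \<in> Theta i \<Longrightarrow> x \<in> X \<Longrightarrow> y \<in> X \<Longrightarrow> z \<in> X \<Longrightarrow>
                     R i t x y \<Longrightarrow> R i t y z \<Longrightarrow> R i t x z"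
    and f_X: "\<And>\<theta>. \<forall>j. \<theta> j \<in> Theta j \<Longrightarrow> f \<theta> \<in> X"
    and outc_X: "\<And>z. z \<in> terminals G \<Longrightarrow> outc G z \<in> X"
    and GM: "gradual_mechanism G Theta f"
  shows "incentive_compatible G Theta R \<longleftrightarrow>
    (\<forall>i \<theta>1 \<theta>2. (\<forall>j. \<theta>1 j \<in> Theta j) \<longrightarrow> (\<forall>j. \<theta>2 j \<in> Theta j) \<longrightarrow>
       (\<exists>s. (\<forall>j. j \<noteq> i \<longrightarrow> is_strategy G j (s j)) \<and>
            type_consistent G Theta (- {i}) s \<theta>1 \<and> type_consistent G Theta (- {i}) s \<theta>2) \<longrightarrow>
       R i (\<theta>1 i) (f \<theta>1) (f \<theta>2))"
proof (intro iffI allI impI)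
  fix i \<theta>1 \<theta>2
  assume IC: "incentive_compatible G Theta R" and \<theta>1: "\<forall>j. \<theta>1 j \<in> Theta j"
    and "\<forall>j. \<theta>2 j \<in> Theta j"
    and "\<exists>s. (\<forall>j. j \<noteq> i \<longrightarrow> is_strategy G j (s j)) \<and>
           type_consistent G Theta (- {i}) s \<theta>1 \<and> type_consistent G Theta (- {i}) s \<theta>2"
  then obtain s where "\<forall>j. j \<noteq> i \<longrightarrow> is_strategy G j (s j)"
    "type_consistent G Theta (- {i}) s \<theta>1" "type_consistent G Theta (- {i}) s \<theta>2"
    by blast
  then show "R i (\<theta>1 i) (f \<theta>1) (f \<theta>2)"
    by (rule incentive_compatible_consistent_pref[OF GM IC \<theta>1])
qed (rule consistent_pref_incentive_compatible[OF GM], blast)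

end
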